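(* Let $\mathcal H$ be a connected $As^c$-$Mag$-bialgebra and define $e:\bar{\mathcal H}\to\bar{\mathcal H}$ by $e=\mathrm{id}+\sum_{n\ge1}(-1)^n\omega^{n+1}\circ\delta^n$. Then: (i) $e(\omega_r^n(x_1,\dots,x_n))=0$ for all $n\ge2$ and all $x_1,\dots,x_n\in\mathrm{Prim}\,\mathcal H$; (ii) $\delta\circ e=0$; (iii) the restriction of $e$ to $\mathrm{Prim}\,\mathcal H$ is the identity.
   Context: An $As^c$-$Mag$-bialgebra is a vector space $\mathcal H$ over a field with a bilinear product $\cdot$ (not assumed associative) with two-sided unit $1$ and a coassociative counital coproduct $\Delta$ with $\Delta(1)=1\otimes1$ and $\Delta(x\cdot y)=\Delta(x)\cdot(1\otimes y)+(x\otimes1)\cdot\Delta(y)-x\otimes y$, the product on $\mathcal H\otimes\mathcal H$ being componentwise. $\bar{\mathcal H}$ = kernel of the counit; reduced coproduct $\delta(x)=\Delta(x)-x\otimes1-1\otimes x$ on $\bar{\mathcal H}$; $\delta^1=\delta$, $\delta^n=(\delta\otimes\mathrm{id}^{\otimes(n-1)})\circ\delta^{n-1}:\bar{\mathcal H}\to\bar{\mathcal H}^{\otimes(n+1)}$; $\mathrm{Prim}\,\mathcal H=\ker\delta$. Connected means: for each $x\in\bar{\mathcal H}$, $\delta^n(x)=0$ for $n$ large, so the sum defining $e$ is finite. $\omega^{m}$ is the left comb $\omega^1(x)=x$, $\omega^m(x_1,\dots,x_m)=\omega^{m-1}(x_1,\dots,x_{m-1})\cdot x_m$, applied to the tensor factors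 ($\omega^{n+1}\circ\delta^n$ means applying $\omega^{n+1}$ to $\delta^n(x)\in\bar{\mathcal H}^{\otimes(n+1)}$). $\omega_r^m$ is the right comb $\omega_r^1(x)=x$, $\omega_r^m(x_1,\dots,x_m)=x_1\cdot\omega_r^{m-1}(x_2,\dots,x_m)$. *)

theory Defs
  imports "HOL-Library.Poly_Mapping"
begin

(* Model: a vector space over the field 'k is represented (via a basis 'b) as
  the free vector space 'b \<Rightarrow>\<^sub>0 'k.  The tensor powers H^{\<otimes>n} are represented
  as the subspaces of 'b list \<Rightarrow>\<^sub>0 'k supported on words of length n
  (basis of H^{\<otimes>n} = e_{b1} \<otimes> ... \<otimes> e_{bn} \<leftrightarrow> [b1,...,bn]). *)

definition smul :: "'k::field \<Rightarrow> ('a \<Rightarrow>\<^sub>0 'k) \<Rightarrow> ('a \<Rightarrow>\<^sub>0 'k)" where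
  "smul c x = Poly_Mapping.map (\<lambda>a. c * a) x"

definition bvec :: "'a \<Rightarrow> ('a \<Rightarrow>\<^sub>0 'k::field)" where
  "bvec b = Poly_Mapping.single b 1"

definition lin_ext :: "('a \<Rightarrow> ('c \<Rightarrow>\<^sub>0 'k::field)) \<Rightarrow> ('a \<Rightarrow>\<^sub>0 'k) \<Rightarrow> ('c \<Rightarrow>\<^sub>0 'k)" where
  "lin_ext g t = (\<Sum>w\<in>Poly_Mapping.keys t. smul (Poly_Mapping.lookup t w) (g w))"

definition cat :: "('b list \<Rightarrow>\<^sub>0 'k::field) \<Rightarrow> ('b list \<Rightarrow>\<^sub>0 'k) \<Rightarrow> ('b list \<Rightarrow>\<^sub>0 'k)" where
  "cat s t = (\<Sum>v\<in>Poly_Mapping.keys s. \<Sum>w\<in>Poly_Mapping.keys t.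
                 Poly_Mapping.single (v @ w) (Poly_Mapping.lookup s v * Poly_Mapping.lookup t w))"

definition emb1 :: "('b \<Rightarrow>\<^sub>0 'k::field) \<Rightarrow> ('b list \<Rightarrow>\<^sub>0 'k)" where
  "emb1 x = lin_ext (\<lambda>b. Poly_Mapping.single [b] 1) x"

fun tens :: "('b \<Rightarrow>\<^sub>0 'k::field) list \<Rightarrow> ('b list \<Rightarrow>\<^sub>0 'k)" where
  "tens [] = Poly_Mapping.single [] 1"
| "tens (x # xs) = cat (emb1 x) (tens xs)"

(* id^{\<otimes>i} \<otimes> F \<otimes> id^{\<otimes>...}: apply the linear map F : H \<rightarrow> T to tensor factor number i (0-based) *)
definition app_at :: "nat \<Rightarrow> (('b \<Rightarrow>\<^sub>0 'k::field) \<Rightarrow> ('b list \<Rightarrow>\<^sub>0 'k)) \<Rightarrow> ('b list \<Rightarrow>\<^sub>0 'k) \<Rightarrow> ('b list \<Rightarrow>\<^sub>0 'k)" where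
  "app_at i F t = lin_ext (\<lambda>w. cat (cat (Poly_Mapping.single (take i w) 1) (F (bvec (w ! i))))
                                   (Poly_Mapping.single (drop (Suc i) w) 1)) t"

(* (\<epsilon> \<otimes> id) and (id \<otimes> \<epsilon>) on H \<otimes> H, with k \<otimes> H = H \<otimes> k = H *)
definition eps_left :: "(('b \<Rightarrow>\<^sub>0 'k::field) \<Rightarrow> 'k) \<Rightarrow> ('b list \<Rightarrow>\<^sub>0 'k) \<Rightarrow> ('b \<Rightarrow>\<^sub>0 'k)" where
  "eps_left eps t = lin_ext (\<lambda>w. smul (eps (bvec (w ! 0))) (bvec (w ! 1))) t"

definition eps_right :: "(('b \<Rightarrow>\<^sub>0 'k::field) \<Rightarrow> 'k) \<Rightarrow> ('b list \<Rightarrow>\<^sub>0 'k) \<Rightarrow> ('b \<Rightarrow>\<^sub>0 'k)" where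
  "eps_right eps t = lin_ext (\<lambda>w. smul (eps (bvec (w ! 1))) (bvec (w ! 0))) t"

definition mult2 :: "(('b \<Rightarrow>\<^sub>0 'k::field) \<Rightarrow> ('b \<Rightarrow>\<^sub>0 'k) \<Rightarrow> ('b \<Rightarrow>\<^sub>0 'k))
    \<Rightarrow> ('b list \<Rightarrow>\<^sub>0 'k) \<Rightarrow> ('b list \<Rightarrow>\<^sub>0 'k) \<Rightarrow> ('b list \<Rightarrow>\<^sub>0 'k)" where
  "mult2 m s t = lin_ext (\<lambda>v. lin_ext (\<lambda>w.
       tens [m (bvec (v ! 0)) (bvec (w ! 0)), m (bvec (v ! 1)) (bvec (w ! 1))]) t) s"

(* left comb \<omega>^m and right comb \<omega>_r^m (m \<ge> 1) *)
fun lcomb :: "('h \<Rightarrow> 'h \<Rightarrow> 'h) \<Rightarrow> 'h list \<Rightarrow> 'h" where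
  "lcomb m [] = undefined"
| "lcomb m (x # xs) = foldl m x xs"

fun rcomb :: "('h \<Rightarrow> 'h \<Rightarrow> 'h) \<Rightarrow> 'h list \<Rightarrow> 'h" where
  "rcomb m [] = undefined"
| "rcomb m [x] = x"
| "rcomb m (x # y # ys) = m x (rcomb m (y # ys))"

(* \<omega> applied to a tensor: \<omega>^{n} on the degree-n component *)
definition omega :: "(('b \<Rightarrow>\<^sub>0 'k::field) \<Rightarrow> ('b \<Rightarrow>\<^sub>0 'k) \<Rightarrow> ('b \<Rightarrow>\<^sub>0 'k))
    \<Rightarrow> ('b list \<Rightarrow>\<^sub>0 'k) \<Rightarrow> ('b \<Rightarrow>\<^sub>0 'k)" where
  "omega m t = lin_ext (\<lambda>w. lcomb m (map bvec w)) t"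

definition AsC_Mag_bialgebra ::
  "(('b \<Rightarrow>\<^sub>0 'k::field) \<Rightarrow> ('b \<Rightarrow>\<^sub>0 'k) \<Rightarrow> ('b \<Rightarrow>\<^sub>0 'k)) \<Rightarrow> ('b \<Rightarrow>\<^sub>0 'k)
   \<Rightarrow> (('b \<Rightarrow>\<^sub>0 'k) \<Rightarrow> ('b list \<Rightarrow>\<^sub>0 'k)) \<Rightarrow> (('b \<Rightarrow>\<^sub>0 'k) \<Rightarrow> 'k) \<Rightarrow> bool" where
  "AsC_Mag_bialgebra m u Delta eps \<longleftrightarrow>
     \<comment> \<open>bilinear product\<close>
     (\<forall>x y z. m (x + y) z = m x z + m y z \<and> m x (y + z) = m x y + m x z) \<and>
     (\<forall>c x y. m (smul c x) y = smul c (m x y) \<and> m x (smul c y) = smul c (m x y)) \<and>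
     \<comment> \<open>two-sided unit\<close>
     (\<forall>x. m u x = x \<and> m x u = x) \<and>
     \<comment> \<open>linear coproduct with values in H \<otimes> H\<close>
     (\<forall>x y. Delta (x + y) = Delta x + Delta y) \<and>
     (\<forall>c x. Delta (smul c x) = smul c (Delta x)) \<and>
     (\<forall>x. Poly_Mapping.keys (Delta x) \<subseteq> {w. length w = 2}) \<and>
     \<comment> \<open>coassociativity\<close>
     (\<forall>x. app_at 0 Delta (Delta x) = app_at 1 Delta (Delta x)) \<and>
     \<comment> \<open>linear counit\<close>
     (\<forall>x y. eps (x + y) = eps x + eps y) \<and>
     (\<forall>c x. eps (smul c x) = c * eps x) \<and>
     (\<forall>x. eps_left eps (Delta x) = x \<and> eps_right eps (Delta x) = x) \<and>
     \<comment> \<open>\<Delta>(1) = 1 \<otimes> 1\<close>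
     Delta u = tens [u, u] \<and>
     \<comment> \<open>compatibility\<close>
     (\<forall>x y. Delta (m x y) = mult2 m (Delta x) (tens [u, y]) + mult2 m (tens [x, u]) (Delta y)
                            - tens [x, y])"

definition Hbar :: "(('b \<Rightarrow>\<^sub>0 'k::field) \<Rightarrow> 'k) \<Rightarrow> ('b \<Rightarrow>\<^sub>0 'k) set" where
  "Hbar eps = {x. eps x = 0}"

definition red_delta :: "('b \<Rightarrow>\<^sub>0 'k::field) \<Rightarrow> (('b \<Rightarrow>\<^sub>0 'k) \<Rightarrow> ('b list \<Rightarrow>\<^sub>0 'k))
    \<Rightarrow> ('b \<Rightarrow>\<^sub>0 'k) \<Rightarrow> ('b list \<Rightarrow>\<^sub>0 'k)" where
  "red_delta u Delta x = Delta x - tens [x, u] - tens [u, x]"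

(* \<delta>^n, n \<ge> 1 (the value at 0 is irrelevant) *)
fun delta_pow :: "('b \<Rightarrow>\<^sub>0 'k::field) \<Rightarrow> (('b \<Rightarrow>\<^sub>0 'k) \<Rightarrow> ('b list \<Rightarrow>\<^sub>0 'k))
    \<Rightarrow> nat \<Rightarrow> ('b \<Rightarrow>\<^sub>0 'k) \<Rightarrow> ('b list \<Rightarrow>\<^sub>0 'k)" where
  "delta_pow u Delta 0 x = emb1 x"
| "delta_pow u Delta (Suc 0) x = red_delta u Delta x"
| "delta_pow u Delta (Suc (Suc n)) x = app_at 0 (red_delta u Delta) (delta_pow u Delta (Suc n) x)"

definition Prim :: "('b \<Rightarrow>\<^sub>0 'k::field) \<Rightarrow> (('b \<Rightarrow>\<^sub>0 'k) \<Rightarrow> ('b list \<Rightarrow>\<^sub>0 'k))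
    \<Rightarrow> (('b \<Rightarrow>\<^sub>0 'k) \<Rightarrow> 'k) \<Rightarrow> ('b \<Rightarrow>\<^sub>0 'k) set" where
  "Prim u Delta eps = {x \<in> Hbar eps. red_delta u Delta x = 0}"

definition connected :: "('b \<Rightarrow>\<^sub>0 'k::field) \<Rightarrow> (('b \<Rightarrow>\<^sub>0 'k) \<Rightarrow> ('b list \<Rightarrow>\<^sub>0 'k))
    \<Rightarrow> (('b \<Rightarrow>\<^sub>0 'k) \<Rightarrow> 'k) \<Rightarrow> bool" where
  "connected u Delta eps \<longleftrightarrow> (\<forall>x\<in>Hbar eps. \<exists>N. \<forall>n\<ge>N. delta_pow u Delta n x = 0)"

(* e = id + \<Sum>_{n\<ge>1} (-1)^n \<omega>^{n+1} \<circ> \<delta>^n  (finite sum: only nonzero terms) *)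
definition e_map :: "(('b \<Rightarrow>\<^sub>0 'k::field) \<Rightarrow> ('b \<Rightarrow>\<^sub>0 'k) \<Rightarrow> ('b \<Rightarrow>\<^sub>0 'k)) \<Rightarrow> ('b \<Rightarrow>\<^sub>0 'k)
    \<Rightarrow> (('b \<Rightarrow>\<^sub>0 'k) \<Rightarrow> ('b list \<Rightarrow>\<^sub>0 'k)) \<Rightarrow> ('b \<Rightarrow>\<^sub>0 'k) \<Rightarrow> ('b \<Rightarrow>\<^sub>0 'k)" where
  "e_map m u Delta x = x + (\<Sum>n | 1 \<le> n \<and> delta_pow u Delta n x \<noteq> 0.
                              smul ((-1) ^ n) (omega m (delta_pow u Delta n x)))"

end

theory Submission
  imports Defs
begin

text \<open>Let \<open>e\<^sub>N = \<Sum>\<^sub>n\<^sub>\<le>\<^sub>N (-1)\<^sup>n \<omega>\<^sup>n\<^sup>+\<^sup>1 \<circ> \<delta>\<^sup>n\<close>; by connectedness \<open>e x = e\<^sub>N x\<close> for large \<open>N\<close>.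
  Since \<open>\<delta>\<^sup>n\<^sup>+\<^sup>1 = (\<delta>\<^sup>n \<otimes> id) \<circ> \<delta>\<close>, the partial sums satisfy
  \<open>e\<^sub>N\<^sub>+\<^sub>1 = id - \<omega>\<^sup>2 \<circ> (e\<^sub>N \<otimes> id) \<circ> \<delta>\<close>.
  For primitive \<open>x\<^sub>i\<close> the reduced coproduct deconcatenates the right comb
  \<open>\<omega>\<^sub>r(x\<^sub>1, \<dots>, x\<^sub>n)\<close>, so by induction on \<open>N\<close> the recursion leaves only
  \<open>x\<^sub>1 \<omega>\<^sub>r(x\<^sub>2, \<dots>, x\<^sub>n)\<close>, which cancels the identity term.
  For \<open>\<delta> \<circ> e = 0\<close>, the compatibility of \<open>\<Delta>\<close> with the product together with coassociativity
  shows, again by induction on \<open>N\<close>, that \<open>\<delta> \<circ> e\<^sub>N\<close> factors through \<open>\<delta>\<^sup>N\<^sup>+\<^sup>1\<close>,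
  which vanishes on \<open>x\<close> for large \<open>N\<close>.\<close>

section \<open>Linear maps between free vector spaces\<close>

lemma lookup_smul [simp]: "Poly_Mapping.lookup (smul c x) k = c * Poly_Mapping.lookup x k"
  by (simp add: smul_def map.rep_eq when_def)

lemma smul_add: "smul c (x + y) = smul c x + smul c y"
  by (rule poly_mapping_eqI) (simp add: lookup_add algebra_simps)

lemma smul_add_left: "smul (c + d) x = smul c x + smul d x"
  by (rule poly_mapping_eqI) (simp add: lookup_add algebra_simps)

lemma smul_diff: "smul c (x - y) = smul c x - smul c y"
  by (rule poly_mapping_eqI) (simp add: lookup_minus algebra_simps)

lemma smul_one [simp]: "smul 1 x = x"
  by (rule poly_mapping_eqI) simp

lemma smul_zero_left [simp]: "smul 0 x = 0"
  by (rule poly_mapping_eqI) simp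

lemma smul_zero_right [simp]: "smul c 0 = 0"
  by (rule poly_mapping_eqI) simp

lemma smul_smul [simp]: "smul c (smul d x) = smul (c * d) x"
  by (rule poly_mapping_eqI) (simp add: algebra_simps)

lemma smul_uminus_left: "smul (- c) x = - smul c x"
  by (rule poly_mapping_eqI) simp

lemma smul_minus_one [simp]: "smul (- 1) x = - x"
  by (rule poly_mapping_eqI) simp

lemma smul_sum: "smul c (sum f A) = (\<Sum>a\<in>A. smul c (f a))"
  by (induction A rule: infinite_finite_induct) (auto simp: smul_add)

lemma smul_single: "smul c (Poly_Mapping.single k a) = Poly_Mapping.single k (c * a)"
  by (rule poly_mapping_eqI) (simp add: lookup_single when_def)

lemma lin_ext_bvec [simp]: "lin_ext g (bvec w) = g w"
  by (simp add: lin_ext_def bvec_def)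

lemma lin_ext_bvec_id [simp]: "lin_ext bvec t = t"
  unfolding lin_ext_def bvec_def
  by (rule poly_mapping_eqI) (simp add: lookup_sum lookup_single when_def in_keys_iff smul_def)

lemma lin_ext_zero [simp]: "lin_ext g 0 = 0"
  by (simp add: lin_ext_def)

lemma lin_ext_superset:
  assumes "finite S" "Poly_Mapping.keys t \<subseteq> S"
  shows "lin_ext g t = (\<Sum>w\<in>S. smul (Poly_Mapping.lookup t w) (g w))"
  unfolding lin_ext_def
  by (rule sum.mono_neutral_left) (use assms in \<open>auto simp: in_keys_iff\<close>)

lemma lin_ext_add: "lin_ext g (s + t) = lin_ext g s + lin_ext g t"
proof -
  let ?S = "Poly_Mapping.keys s \<union> Poly_Mapping.keys t"
  have "lin_ext g (s + t) = (\<Sum>w\<in>?S. smul (Poly_Mapping.lookup (s + t) w) (g w))"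
    by (rule lin_ext_superset) (auto dest: set_mp[OF keys_add])
  also have "\<dots> = (\<Sum>w\<in>?S. smul (Poly_Mapping.lookup s w) (g w))
                 + (\<Sum>w\<in>?S. smul (Poly_Mapping.lookup t w) (g w))"
    by (simp add: lookup_add smul_add_left sum.distrib)
  also have "\<dots> = lin_ext g s + lin_ext g t"
    by (subst (1 2) lin_ext_superset[where S = ?S]) auto
  finally show ?thesis .
qed

lemma lin_ext_smul: "lin_ext g (smul c t) = smul c (lin_ext g t)"
proof -
  have "lin_ext g (smul c t)
      = (\<Sum>w\<in>Poly_Mapping.keys t. smul (Poly_Mapping.lookup (smul c t) w) (g w))"
    by (rule lin_ext_superset) (auto simp: in_keys_iff)
  then show ?thesis
    by (simp add: lin_ext_def smul_sum)
qed

lemma lin_ext_cong: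
  "(\<And>w. w \<in> Poly_Mapping.keys t \<Longrightarrow> g w = h w) \<Longrightarrow> lin_ext g t = lin_ext h t"
  by (simp add: lin_ext_def)

lemma lin_ext_fun_add: "lin_ext (\<lambda>w. g w + h w) t = lin_ext g t + lin_ext h t"
  by (simp add: lin_ext_def smul_add sum.distrib)

lemma lin_ext_fun_diff: "lin_ext (\<lambda>w. g w - h w) t = lin_ext g t - lin_ext h t"
  by (simp add: lin_ext_def smul_diff sum_subtractf)

lemma lin_ext_fun_smul: "lin_ext (\<lambda>w. smul c (g w)) t = smul c (lin_ext g t)"
  by (simp add: lin_ext_def smul_sum mult.commute)

lemma lin_ext_fun_sum: "lin_ext (\<lambda>w. \<Sum>a\<in>A. g a w) t = (\<Sum>a\<in>A. lin_ext (g a) t)"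
  by (simp add: lin_ext_def smul_sum sum.swap[of _ A])

definition lin_map :: "(('a \<Rightarrow>\<^sub>0 'k::field) \<Rightarrow> ('c \<Rightarrow>\<^sub>0 'k)) \<Rightarrow> bool" where
  "lin_map F \<longleftrightarrow> (\<forall>x y. F (x + y) = F x + F y) \<and> (\<forall>c x. F (smul c x) = smul c (F x))"

lemma lin_mapD:
  assumes "lin_map F"
  shows lin_map_add: "F (x + y) = F x + F y" and lin_map_smul: "F (smul c x) = smul c (F x)"
  using assms by (auto simp: lin_map_def)

lemma lin_map_zero: "lin_map F \<Longrightarrow> F 0 = 0"
  using lin_map_smul[of F 0 0] by simp

lemma lin_map_uminus: "lin_map F \<Longrightarrow> F (- x) = - F x"
  using lin_map_smul[of F "- 1" x] by simp

lemma lin_map_diff: "lin_map F \<Longrightarrow> F (x - y) = F x - F y"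
  using lin_map_add[of F x "- y"] by (simp add: lin_map_uminus)

lemma lin_map_sum: "lin_map F \<Longrightarrow> F (sum f A) = (\<Sum>a\<in>A. F (f a))"
  by (induction A rule: infinite_finite_induct) (auto simp: lin_map_zero lin_map_add)

lemma lin_map_lin_ext [simp]: "lin_map (lin_ext g)"
  by (simp add: lin_map_def lin_ext_add lin_ext_smul)

lemma lin_map_lin_ext_commute: "lin_map F \<Longrightarrow> F (lin_ext g t) = lin_ext (\<lambda>w. F (g w)) t"
  by (simp add: lin_ext_def lin_map_sum lin_mapD)

lemma lin_map_eq_lin_ext: "lin_map F \<Longrightarrow> F t = lin_ext (\<lambda>w. F (bvec w)) t"
  using lin_map_lin_ext_commute[of F bvec t] by simp

lemma lin_map_eqI:
  assumes "lin_map F" "lin_map G" "\<And>w. F (bvec w) = G (bvec w)"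
  shows "F t = G t"
  using lin_map_eq_lin_ext[OF assms(1), of t] lin_map_eq_lin_ext[OF assms(2), of t] assms(3)
  by simp

lemma lin_map_comp: "lin_map F \<Longrightarrow> lin_map G \<Longrightarrow> lin_map (\<lambda>x. F (G x))"
  by (simp add: lin_map_def)

lemma lin_map_fun_diff: "lin_map F \<Longrightarrow> lin_map G \<Longrightarrow> lin_map (\<lambda>x. F x - G x)"
  by (simp add: lin_map_def smul_diff)

lemma lin_map_fun_smul: "lin_map F \<Longrightarrow> lin_map (\<lambda>x. smul c (F x))"
  by (simp add: lin_map_def smul_add mult.commute)

lemma lin_map_fun_sum: "(\<And>a. a \<in> A \<Longrightarrow> lin_map (F a)) \<Longrightarrow> lin_map (\<lambda>x. \<Sum>a\<in>A. F a x)"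
  by (simp add: lin_map_def smul_sum sum.distrib)

lemma lin_map_id: "lin_map (\<lambda>x. x)"
  by (simp add: lin_map_def)


section \<open>Tensors\<close>

definition homogeneous :: "nat \<Rightarrow> ('a list \<Rightarrow>\<^sub>0 'k::field) \<Rightarrow> bool" where
  "homogeneous n t \<longleftrightarrow> (\<forall>w\<in>Poly_Mapping.keys t. length w = n)"

lemma homogeneous_bvec: "length w = n \<Longrightarrow> homogeneous n (bvec w)"
  by (simp add: homogeneous_def bvec_def)

lemma homogeneous_diff: "homogeneous n s \<Longrightarrow> homogeneous n t \<Longrightarrow> homogeneous n (s - t)"
  by (auto simp: homogeneous_def dest: set_mp[OF keys_diff])

lemma homogeneous_lin_ext:
  "(\<And>w. w \<in> Poly_Mapping.keys t \<Longrightarrow> homogeneous n (g w)) \<Longrightarrow> homogeneous n (lin_ext g t)"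
  unfolding lin_ext_def homogeneous_def
  by (fastforce dest!: set_mp[OF keys_sum] simp: in_keys_iff)

lemma lin_map_eq_on_homogeneous:
  assumes "lin_map F" "lin_map G" "homogeneous n t"
    and "\<And>w. length w = n \<Longrightarrow> F (bvec w) = G (bvec w)"
  shows "F t = G t"
proof -
  have "F t = lin_ext (\<lambda>w. F (bvec w)) t" by (rule lin_map_eq_lin_ext) fact
  also have "\<dots> = lin_ext (\<lambda>w. G (bvec w)) t"
    by (rule lin_ext_cong) (use assms(3,4) in \<open>auto simp: homogeneous_def\<close>)
  also have "\<dots> = G t" by (rule lin_map_eq_lin_ext[symmetric]) fact
  finally show ?thesis .
qed

lemma cat_eq_lin_ext: "cat s t = lin_ext (\<lambda>v. lin_ext (\<lambda>w. bvec (v @ w)) t) s"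
  by (simp add: cat_def lin_ext_def smul_sum bvec_def smul_single)

lemma lin_map_cat_left: "lin_map (\<lambda>s. cat s t)"
  by (simp add: cat_eq_lin_ext)

lemma lin_map_cat_right: "lin_map (cat s)"
  by (simp add: lin_map_def cat_eq_lin_ext lin_ext_add lin_ext_fun_add lin_ext_smul lin_ext_fun_smul)

lemma cat_bvec [simp]: "cat (bvec v) (bvec w) = bvec (v @ w)"
  by (simp add: cat_eq_lin_ext)

lemma cat_add_left: "cat (s1 + s2) t = cat s1 t + cat s2 t"
  using lin_map_add[OF lin_map_cat_left] .

lemma cat_add_right: "cat s (t1 + t2) = cat s t1 + cat s t2"
  using lin_map_add[OF lin_map_cat_right] .

lemma cat_uminus_left: "cat (- s) t = - cat s t"
  using lin_map_uminus[OF lin_map_cat_left] .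

lemma cat_uminus_right: "cat s (- t) = - cat s t"
  using lin_map_uminus[OF lin_map_cat_right] .

lemma cat_Nil_left [simp]: "cat (bvec []) t = t"
  by (rule lin_map_eqI[OF lin_map_cat_right lin_map_id]) simp

lemma cat_Nil_right [simp]: "cat t (bvec []) = t"
  by (rule lin_map_eqI[OF lin_map_cat_left lin_map_id]) simp

lemma cat_assoc: "cat (cat r s) t = cat r (cat s t)"
proof -
  have cons: "cat (bvec (a @ b)) t = cat (bvec a) (cat (bvec b) t)" for a b
    by (rule lin_map_eqI[OF lin_map_cat_right lin_map_comp[OF lin_map_cat_right lin_map_cat_right]])
      simp
  have "cat (cat (bvec a) s) t = cat (bvec a) (cat s t)" for a
    by (rule lin_map_eqI[OF lin_map_comp[OF lin_map_cat_left lin_map_cat_right]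
          lin_map_comp[OF lin_map_cat_right lin_map_cat_left]]) (simp only: cat_bvec cons)
  then show ?thesis
    by (rule lin_map_eqI[OF lin_map_comp[OF lin_map_cat_left lin_map_cat_left] lin_map_cat_left])
qed

lemma cat_bvec_assoc [simp]: "cat (bvec v) (cat (bvec w) t) = cat (bvec (v @ w)) t"
  by (simp add: cat_assoc[symmetric])

lemma homogeneous_cat:
  "homogeneous a s \<Longrightarrow> homogeneous b t \<Longrightarrow> homogeneous (a + b) (cat s t)"
  unfolding cat_def homogeneous_def
  by (intro ballI) (auto dest!: set_mp[OF keys_sum] split: if_splits)

lemma tens_Nil [simp]: "tens [] = bvec []"
  by (simp add: bvec_def)

declare tens.simps(1) [simp del]

lemma emb1_eq_lin_ext: "emb1 = lin_ext (\<lambda>b. bvec [b])"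
  by (rule ext) (simp add: emb1_def bvec_def)

lemma lin_map_emb1: "lin_map emb1"
  by (simp add: emb1_eq_lin_ext)

lemma emb1_bvec [simp]: "emb1 (bvec b) = bvec [b]"
  by (simp add: emb1_eq_lin_ext)

lemma homogeneous_emb1: "homogeneous 1 (emb1 x)"
  unfolding emb1_eq_lin_ext
  by (rule homogeneous_lin_ext) (simp add: homogeneous_bvec)

lemma tens2: "tens [x, y] = cat (emb1 x) (emb1 y)"
  by simp

declare tens.simps(2) [simp del]

lemma lin_map_tens_left: "lin_map (\<lambda>x. tens [x, y])"
  unfolding tens2 by (rule lin_map_comp[OF lin_map_cat_left lin_map_emb1])

lemma lin_map_tens_right: "lin_map (\<lambda>y. tens [x, y])"
  unfolding tens2 by (rule lin_map_comp[OF lin_map_cat_right lin_map_emb1])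

lemma tens2_bvec [simp]: "tens [bvec a, bvec b] = bvec [a, b]"
  by (simp only: tens2 emb1_bvec cat_bvec append.simps)

lemma homogeneous_tens2: "homogeneous 2 (tens [x, y])"
  using homogeneous_cat[OF homogeneous_emb1 homogeneous_emb1, of x y]
  by (simp add: tens2 numeral_2_eq_2)

lemma tens2_diff_left: "tens [a1 - a2, b] = tens [a1, b] - tens [a2, b]"
  using lin_map_diff[OF lin_map_tens_left] .

lemma tens2_smul_left: "tens [smul c a, b] = smul c (tens [a, b])"
  using lin_map_smul[OF lin_map_tens_left] .

lemma length_2_cases:
  assumes "length w = 2"
  obtains a b where "w = [a, b]"
  using assms by (auto simp: numeral_2_eq_2 length_Suc_conv)

lemma lin_map_tens2_eqI:
  assumes F: "lin_map F"
    and G: "\<And>b. lin_map (\<lambda>a. G a b)" "\<And>a. lin_map (G a)"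
    and basis: "\<And>i j. F (bvec [i, j]) = G (bvec i) (bvec j)"
  shows "F (tens [a, b]) = G a b"
proof -
  have "F (tens [bvec i, b]) = G (bvec i) b" for i
    by (rule lin_map_eqI[OF lin_map_comp[OF F lin_map_tens_right] G(2)]) (simp add: basis)
  then show ?thesis
    by (rule lin_map_eqI[OF lin_map_comp[OF F lin_map_tens_left] G(1)])
qed

lemma app_at_bvec:
  "app_at i F (bvec w) = cat (cat (bvec (take i w)) (F (bvec (w ! i)))) (bvec (drop (Suc i) w))"
  by (simp only: app_at_def lin_ext_bvec) (simp add: bvec_def)

lemma app_at_0_bvec [simp]: "app_at 0 F (bvec (a # w)) = cat (F (bvec a)) (bvec w)"
  by (simp add: app_at_bvec)

lemma app_at_1_bvec [simp]:
  "app_at (Suc 0) F (bvec (a # b # w)) = cat (bvec [a]) (cat (F (bvec b)) (bvec w))"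
  by (simp add: app_at_bvec cat_assoc)

lemma lin_map_app_at: "lin_map (app_at i F)"
  by (simp add: app_at_def[abs_def])

lemma app_at_eq_lin_ext: "app_at i F t = lin_ext (\<lambda>w. app_at i F (bvec w)) t"
  by (rule lin_map_eq_lin_ext[OF lin_map_app_at])

lemma app_at_fun_add: "app_at i (\<lambda>y. F y + G y) t = app_at i F t + app_at i G t"
  by (simp add: app_at_def cat_add_left cat_add_right lin_ext_fun_add)

lemma homogeneous_app_at_0:
  assumes t: "homogeneous (Suc k) t" and F: "\<And>y. homogeneous j (F y)"
  shows "homogeneous (j + k) (app_at 0 F t)"
proof -
  have "homogeneous (j + k) (lin_ext (\<lambda>w. app_at 0 F (bvec w)) t)"
  proof (rule homogeneous_lin_ext)
    fix w assume "w \<in> Poly_Mapping.keys t"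
    then obtain b w' where "w = b # w'" "length w' = k"
      using t by (auto simp: homogeneous_def length_Suc_conv)
    then show "homogeneous (j + k) (app_at 0 F (bvec w))"
      using homogeneous_cat[OF F homogeneous_bvec] by simp
  qed
  then show ?thesis
    by (simp flip: lin_map_eq_lin_ext[OF lin_map_app_at])
qed

lemma app_at_0_cat_bvec:
  assumes "homogeneous (Suc k) s"
  shows "app_at 0 F (cat s (bvec v)) = cat (app_at 0 F s) (bvec v)"
  by (rule lin_map_eq_on_homogeneous[OF lin_map_comp[OF lin_map_app_at lin_map_cat_left]
        lin_map_comp[OF lin_map_cat_left lin_map_app_at] assms])
    (auto simp: length_Suc_conv cat_assoc)

lemma app_at_0_tens2: "lin_map F \<Longrightarrow> app_at 0 F (tens [a, b]) = cat (F a) (emb1 b)"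
  by (rule lin_map_tens2_eqI[OF lin_map_app_at])
    (auto intro: lin_map_comp[OF lin_map_cat_left] lin_map_comp[OF lin_map_cat_right lin_map_emb1])

lemma app_at_1_tens2: "lin_map F \<Longrightarrow> app_at 1 F (tens [a, b]) = cat (emb1 a) (F b)"
  by (rule lin_map_tens2_eqI[OF lin_map_app_at])
    (auto intro: lin_map_comp[OF lin_map_cat_right] lin_map_comp[OF lin_map_cat_left lin_map_emb1])

lemma app_at_0_right_unit:
  "homogeneous 2 t \<Longrightarrow> app_at 0 (\<lambda>y. tens [y, u]) t = app_at 1 (\<lambda>y. tens [u, y]) t"
  by (rule lin_map_eq_on_homogeneous[OF lin_map_app_at lin_map_app_at])
    (auto elim!: length_2_cases simp: tens2 cat_assoc)

lemma app_at_0_left_unit: "homogeneous 2 t \<Longrightarrow> app_at 0 (\<lambda>y. tens [u, y]) t = cat (emb1 u) t"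
  by (rule lin_map_eq_on_homogeneous[OF lin_map_app_at lin_map_cat_right])
    (auto elim!: length_2_cases simp: tens2 cat_assoc)

lemma app_at_1_right_unit: "homogeneous 2 t \<Longrightarrow> app_at 1 (\<lambda>y. tens [y, u]) t = cat t (emb1 u)"
  by (rule lin_map_eq_on_homogeneous[OF lin_map_app_at lin_map_cat_left])
    (auto elim!: length_2_cases simp: tens2 cat_assoc)

lemma lin_map_mult2_left: "lin_map (\<lambda>s. mult2 m s t)"
  by (simp add: mult2_def)

lemma lin_map_mult2_right: "lin_map (mult2 m s)"
  by (simp add: lin_map_def mult2_def lin_ext_add lin_ext_fun_add lin_ext_smul lin_ext_fun_smul)

lemma mult2_zero_left [simp]: "mult2 m 0 t = 0"
  using lin_map_zero[OF lin_map_mult2_left] .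

lemma mult2_bvec_right: "mult2 m s (bvec w) = mult2 m s (tens [bvec (w ! 0), bvec (w ! 1)])"
  by (rule lin_map_eqI[OF lin_map_mult2_left lin_map_mult2_left]) (simp add: mult2_def)

lemma mult2_tens2:
  assumes m: "\<And>y. lin_map (\<lambda>x. m x y)" "\<And>x. lin_map (m x)"
  shows "mult2 m (tens [a, b]) (tens [c, d]) = tens [m a c, m b d]"
proof -
  have "mult2 m (bvec [i, j]) (tens [c, d]) = tens [m (bvec i) c, m (bvec j) d]" for i j
    by (rule lin_map_tens2_eqI[OF lin_map_mult2_right], rule lin_map_comp[OF lin_map_tens_left m(2)],
        rule lin_map_comp[OF lin_map_tens_right m(2)]) (simp add: mult2_def)
  then show ?thesis
    by (intro lin_map_tens2_eqI[OF lin_map_mult2_left, where G = "\<lambda>a b. tens [m a c, m b d]"]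
        lin_map_comp[OF lin_map_tens_left m(1)] lin_map_comp[OF lin_map_tens_right m(1)])
qed

lemma omega_eq_lin_ext: "omega m = lin_ext (\<lambda>w. lcomb m (map bvec w))"
  by (rule ext) (simp add: omega_def)

lemma lin_map_omega: "lin_map (omega m)"
  by (simp add: omega_eq_lin_ext)

lemma omega_zero [simp]: "omega m 0 = 0"
  using lin_map_zero[OF lin_map_omega] .

lemma omega_emb1 [simp]: "omega m (emb1 x) = x"
  by (rule lin_map_eqI[OF lin_map_comp[OF lin_map_omega lin_map_emb1] lin_map_id])
    (simp add: omega_eq_lin_ext)

lemma omega_cat_bvec:
  assumes m: "\<And>y. lin_map (\<lambda>x. m x y)" and s: "homogeneous (Suc k) s"
  shows "omega m (cat s (bvec [b])) = m (omega m s) (bvec b)"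
  by (rule lin_map_eq_on_homogeneous[OF lin_map_comp[OF lin_map_omega lin_map_cat_left]
        lin_map_comp[OF m lin_map_omega] s])
    (auto simp: omega_eq_lin_ext length_Suc_conv)


section \<open>\<open>As\<^sup>c-Mag\<close>-bialgebras\<close>

locale AsC_Mag =
  fixes m :: "('b \<Rightarrow>\<^sub>0 'k::field) \<Rightarrow> ('b \<Rightarrow>\<^sub>0 'k) \<Rightarrow> ('b \<Rightarrow>\<^sub>0 'k)"
    and u :: "'b \<Rightarrow>\<^sub>0 'k"
    and Delta :: "('b \<Rightarrow>\<^sub>0 'k) \<Rightarrow> ('b list \<Rightarrow>\<^sub>0 'k)"
    and eps :: "('b \<Rightarrow>\<^sub>0 'k) \<Rightarrow> 'k"
  assumes bialgebra: "AsC_Mag_bialgebra m u Delta eps"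
begin

abbreviation d where "d \<equiv> red_delta u Delta"
abbreviation dp where "dp \<equiv> delta_pow u Delta"

lemma lin_map_mult_left: "lin_map (\<lambda>x. m x y)"
  using bialgebra by (simp add: AsC_Mag_bialgebra_def lin_map_def)

lemma lin_map_mult_right: "lin_map (m x)"
  using bialgebra by (simp add: AsC_Mag_bialgebra_def lin_map_def)

lemma mult_unit_left [simp]: "m u x = x"
  and mult_unit_right [simp]: "m x u = x"
  using bialgebra by (simp_all add: AsC_Mag_bialgebra_def)

lemma mult_zero_left [simp]: "m 0 y = 0"
  using lin_map_zero[OF lin_map_mult_left] .

lemma lin_map_Delta: "lin_map Delta"
  using bialgebra by (simp add: AsC_Mag_bialgebra_def lin_map_def)

lemma homogeneous_Delta: "homogeneous 2 (Delta x)"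
  using bialgebra by (auto simp: AsC_Mag_bialgebra_def homogeneous_def)

lemma Delta_coassoc: "app_at 0 Delta (Delta x) = app_at 1 Delta (Delta x)"
  using bialgebra by (simp add: AsC_Mag_bialgebra_def)

lemma eps_add: "eps (x + y) = eps x + eps y"
  and eps_smul: "eps (smul c x) = c * eps x"
  and eps_right_Delta: "eps_right eps (Delta x) = x"
  and Delta_unit: "Delta u = tens [u, u]"
  and Delta_mult: "Delta (m x y) = mult2 m (Delta x) (tens [u, y]) + mult2 m (tens [x, u]) (Delta y)
                                    - tens [x, y]"
  using bialgebra by (simp_all add: AsC_Mag_bialgebra_def)

lemmas mult2_tens2_mult [simp] = mult2_tens2[OF lin_map_mult_left lin_map_mult_right]

lemma Delta_eq_red_delta: "Delta x = d x + tens [x, u] + tens [u, x]"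
  by (simp add: red_delta_def)

lemma lin_map_red_delta: "lin_map d"
proof -
  have "lin_map (\<lambda>x. Delta x - tens [x, u] - tens [u, x])"
    by (intro lin_map_fun_diff lin_map_Delta lin_map_tens_left lin_map_tens_right)
  then show ?thesis by (simp add: red_delta_def[abs_def])
qed

lemma homogeneous_red_delta: "homogeneous 2 (d x)"
  unfolding red_delta_def by (intro homogeneous_diff homogeneous_Delta homogeneous_tens2)

lemma red_delta_unit: "d u = - tens [u, u]"
  by (simp add: red_delta_def Delta_unit)

lemma red_delta_mult:
  "d (m a b) = tens [a, b] + mult2 m (d a) (tens [u, b]) + mult2 m (tens [a, u]) (d b)"
proof -
  have "Delta (m a b) = mult2 m (d a + tens [a, u] + tens [u, a]) (tens [u, b])
      + mult2 m (tens [a, u]) (d b + tens [b, u] + tens [u, b]) - tens [a, b]"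
    by (simp only: Delta_mult Delta_eq_red_delta[symmetric])
  also have "\<dots> = mult2 m (d a) (tens [u, b]) + tens [a, b] + tens [u, m a b]
      + mult2 m (tens [a, u]) (d b) + tens [m a b, u] + tens [a, b] - tens [a, b]"
    by (simp add: lin_map_add[OF lin_map_mult2_left] lin_map_add[OF lin_map_mult2_right])
  finally show ?thesis
    by (simp add: red_delta_def algebra_simps)
qed

text \<open>The terms involving the unit cancel in pairs.\<close>

lemma red_delta_coassoc: "app_at 0 d (d x) = app_at 1 d (d x)"
proof -
  have Delta_fun: "Delta = (\<lambda>y. (d y + tens [y, u]) + tens [u, y])"
    by (rule ext) (rule Delta_eq_red_delta)
  have hom: "homogeneous 2 (Delta x)" by (rule homogeneous_Delta)
  have Dx: "Delta x = d x + tens [x, u] + tens [u, x]" by (rule Delta_eq_red_delta)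
  have split: "app_at i Delta (Delta x) = app_at i d (Delta x) + app_at i (\<lambda>y. tens [y, u]) (Delta x)
      + app_at i (\<lambda>y. tens [u, y]) (Delta x)" for i
    by (subst (1) Delta_fun) (simp only: app_at_fun_add)
  have d0: "app_at 0 d (Delta x) = app_at 0 d (d x) + cat (d x) (emb1 u) + cat (d u) (emb1 x)"
    by (simp only: Dx lin_map_add[OF lin_map_app_at] app_at_0_tens2[OF lin_map_red_delta])
  have d1: "app_at 1 d (Delta x) = app_at 1 d (d x) + cat (emb1 x) (d u) + cat (emb1 u) (d x)"
    by (simp only: Dx lin_map_add[OF lin_map_app_at] app_at_1_tens2[OF lin_map_red_delta])
  have "app_at 0 d (d x) + cat (d x) (emb1 u) + cat (d u) (emb1 x)
      + app_at 1 (\<lambda>y. tens [u, y]) (Delta x) + cat (emb1 u) (Delta x)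
    = app_at 1 d (d x) + cat (emb1 x) (d u) + cat (emb1 u) (d x)
      + cat (Delta x) (emb1 u) + app_at 1 (\<lambda>y. tens [u, y]) (Delta x)"
    using Delta_coassoc[of x]
    unfolding split d0 d1 app_at_0_left_unit[OF hom] app_at_0_right_unit[OF hom]
      app_at_1_right_unit[OF hom] .
  then show ?thesis
    by (simp add: Dx red_delta_unit cat_add_left cat_add_right cat_uminus_left cat_uminus_right
        tens2 cat_assoc algebra_simps)
qed

lemma delta_pow_Suc: "dp (Suc n) x = app_at 0 d (dp n x)"
proof (cases n)
  case 0
  have "app_at 0 d (emb1 x) = d x"
    by (rule lin_map_eqI[OF lin_map_comp[OF lin_map_app_at lin_map_emb1] lin_map_red_delta]) simp
  then show ?thesis using 0 by simp
qed simp

lemma lin_map_delta_pow: "lin_map (dp n)"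
proof (induction n)
  case 0
  have "dp 0 = emb1" by (rule ext) simp
  then show ?case by (simp add: lin_map_emb1)
next
  case (Suc n)
  show ?case
    unfolding delta_pow_Suc by (rule lin_map_comp[OF lin_map_app_at Suc])
qed

lemma homogeneous_delta_pow: "homogeneous (Suc n) (dp n x)"
proof (induction n)
  case 0
  then show ?case using homogeneous_emb1[of x] by simp
next
  case (Suc n)
  show ?case
    using homogeneous_app_at_0[OF Suc homogeneous_red_delta] by (simp add: delta_pow_Suc)
qed

text \<open>By definition \<open>\<delta>\<^sup>n\<^sup>+\<^sup>1 = (\<delta> \<otimes> id) \<circ> \<delta>\<^sup>n\<close>; here the other factorisation
  \<open>\<delta>\<^sup>n\<^sup>+\<^sup>1 = (\<delta>\<^sup>n \<otimes> id) \<circ> \<delta>\<close>, which needs no coassociativity.\<close>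

lemma delta_pow_Suc_right:
  "dp (Suc n) x = lin_ext (\<lambda>w. cat (dp n (bvec (w ! 0))) (bvec [w ! 1])) (d x)"
proof (induction n)
  case 0
  have "lin_ext (\<lambda>w. cat (dp 0 (bvec (w ! 0))) (bvec [w ! 1])) (d x) = lin_ext bvec (d x)"
    by (rule lin_ext_cong)
      (use homogeneous_red_delta[of x] in \<open>auto simp: homogeneous_def elim!: length_2_cases\<close>)
  then show ?case by simp
next
  case (Suc n)
  have "dp (Suc (Suc n)) x = app_at 0 d (dp (Suc n) x)" by (rule delta_pow_Suc)
  also have "\<dots> = lin_ext (\<lambda>w. app_at 0 d (cat (dp n (bvec (w ! 0))) (bvec [w ! 1]))) (d x)"
    by (simp add: Suc lin_map_lin_ext_commute[OF lin_map_app_at])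
  also have "\<dots> = lin_ext (\<lambda>w. cat (dp (Suc n) (bvec (w ! 0))) (bvec [w ! 1])) (d x)"
    by (simp add: app_at_0_cat_bvec[OF homogeneous_delta_pow] delta_pow_Suc)
  finally show ?case .
qed

text \<open>\<open>mult_fst G\<close> is \<open>\<omega>\<^sup>2 \<circ> (G \<otimes> id)\<close> on \<open>H \<otimes> H\<close>.\<close>

definition mult_fst :: "(('b \<Rightarrow>\<^sub>0 'k) \<Rightarrow> ('b \<Rightarrow>\<^sub>0 'k)) \<Rightarrow> ('b list \<Rightarrow>\<^sub>0 'k) \<Rightarrow> ('b \<Rightarrow>\<^sub>0 'k)" where
  "mult_fst G t = lin_ext (\<lambda>w. m (G (bvec (w ! 0))) (bvec (w ! 1))) t"

lemma lin_map_mult_fst: "lin_map (mult_fst G)"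
  by (simp add: mult_fst_def[abs_def])

lemma mult_fst_tens2: "lin_map G \<Longrightarrow> mult_fst G (tens [a, b]) = m (G a) b"
  by (rule lin_map_tens2_eqI[OF lin_map_mult_fst])
    (auto intro: lin_map_comp[OF lin_map_mult_left] lin_map_mult_right simp: mult_fst_def)

lemma mult_fst_fun_sum:
  "mult_fst (\<lambda>y. \<Sum>n\<in>A. smul (c n) (G n y)) t = (\<Sum>n\<in>A. smul (c n) (mult_fst (G n) t))"
  unfolding mult_fst_def
  by (simp add: lin_map_sum[OF lin_map_mult_left] lin_map_smul[OF lin_map_mult_left]
      lin_ext_fun_sum lin_ext_fun_smul)

lemma omega_delta_pow_Suc: "omega m (dp (Suc n) x) = mult_fst (\<lambda>y. omega m (dp n y)) (d x)"
  by (simp add: delta_pow_Suc_right lin_map_lin_ext_commute[OF lin_map_omega] mult_fst_def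
      omega_cat_bvec[OF lin_map_mult_left homogeneous_delta_pow])

text \<open>\<open>e_trunc N\<close> is \<open>e\<^sub>N\<close>; its \<open>n = 0\<close> term is the identity because \<open>\<delta>\<^sup>0\<close> is the embedding
  of \<open>H\<close> as tensors of degree one.\<close>

definition e_trunc :: "nat \<Rightarrow> ('b \<Rightarrow>\<^sub>0 'k) \<Rightarrow> ('b \<Rightarrow>\<^sub>0 'k)" where
  "e_trunc N x = (\<Sum>n\<le>N. smul ((- 1) ^ n) (omega m (dp n x)))"

lemma lin_map_e_trunc: "lin_map (e_trunc N)"
  unfolding e_trunc_def[abs_def]
  by (intro lin_map_fun_sum lin_map_fun_smul lin_map_comp[OF lin_map_omega lin_map_delta_pow])

lemma e_trunc_0: "e_trunc 0 x = x"
  by (simp add: e_trunc_def)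

lemma e_trunc_Suc_diff:
  "e_trunc (Suc N) x - e_trunc N x = smul ((- 1) ^ Suc N) (omega m (dp (Suc N) x))"
  by (simp add: e_trunc_def)

lemma e_trunc_Suc: "e_trunc (Suc N) x = x - mult_fst (e_trunc N) (d x)"
proof -
  have "e_trunc (Suc N) x = smul ((- 1) ^ 0) (omega m (dp 0 x))
      + (\<Sum>n\<le>N. smul ((- 1) ^ Suc n) (omega m (dp (Suc n) x)))"
    unfolding e_trunc_def by (rule sum.atMost_Suc_shift)
  also have "\<dots> = x - (\<Sum>n\<le>N. smul ((- 1) ^ n) (mult_fst (\<lambda>y. omega m (dp n y)) (d x)))"
    by (simp add: omega_delta_pow_Suc smul_uminus_left sum_negf)
  also have "(\<Sum>n\<le>N. smul ((- 1) ^ n) (mult_fst (\<lambda>y. omega m (dp n y)) (d x)))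
      = mult_fst (e_trunc N) (d x)"
    unfolding e_trunc_def[abs_def] by (rule mult_fst_fun_sum[symmetric])
  finally show ?thesis .
qed

lemma e_map_eq_e_trunc:
  assumes vanish: "\<forall>n\<ge>N0. dp n x = 0" and "N0 \<le> N"
  shows "e_map m u Delta x = e_trunc N x"
proof -
  let ?f = "\<lambda>n. smul ((- 1) ^ n) (omega m (dp n x))"
  let ?S = "{n. 1 \<le> n \<and> dp n x \<noteq> 0}"
  have S: "?S \<subseteq> {..N}"
    using vanish \<open>N0 \<le> N\<close> by (auto simp: not_le intro: ccontr)
  have "e_trunc N x = sum ?f (insert 0 ?S)"
    unfolding e_trunc_def
    by (rule sum.mono_neutral_right) (use S in auto)
  also have "\<dots> = ?f 0 + sum ?f ?S"
    by (rule sum.insert) (use S in \<open>auto intro: finite_subset\<close>)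
  finally show ?thesis
    by (simp add: e_map_def)
qed


subsection \<open>\<open>\<delta> \<circ> e = 0\<close>\<close>

lemma red_delta_mult_fst:
  "d (mult_fst G t) = lin_ext (\<lambda>w. tens [G (bvec (w ! 0)), bvec (w ! 1)]) t
     + lin_ext (\<lambda>w. mult2 m (d (G (bvec (w ! 0)))) (tens [u, bvec (w ! 1)])) t
     + lin_ext (\<lambda>w. mult2 m (tens [G (bvec (w ! 0)), u]) (d (bvec (w ! 1)))) t"
  unfolding mult_fst_def
  by (simp add: lin_map_lin_ext_commute[OF lin_map_red_delta] red_delta_mult lin_ext_fun_add)

text \<open>\<open>mult_fst3 G\<close> is \<open>mult_fst G \<otimes> id\<close> on \<open>H\<^sup>\<otimes>\<^sup>3\<close>.\<close>

definition mult_fst3 :: "(('b \<Rightarrow>\<^sub>0 'k) \<Rightarrow> ('b \<Rightarrow>\<^sub>0 'k)) \<Rightarrow> ('b list \<Rightarrow>\<^sub>0 'k) \<Rightarrow> ('b list \<Rightarrow>\<^sub>0 'k)" where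
  "mult_fst3 G s = lin_ext (\<lambda>v. tens [m (G (bvec (v ! 0))) (bvec (v ! 1)), bvec (v ! 2)]) s"

lemma lin_map_mult_fst3: "lin_map (mult_fst3 G)"
  by (simp add: mult_fst3_def[abs_def])

lemma mult_fst3_cat_bvec_left: "mult_fst3 G (cat (bvec [a]) s) = mult2 m (tens [G (bvec a), u]) s"
proof (rule lin_map_eqI[OF lin_map_comp[OF lin_map_mult_fst3 lin_map_cat_right] lin_map_mult2_right])
  fix w
  show "mult_fst3 G (cat (bvec [a]) (bvec w)) = mult2 m (tens [G (bvec a), u]) (bvec w)"
    by (subst mult2_bvec_right) (simp add: mult_fst3_def numeral_2_eq_2 del: tens2_bvec)
qed

lemma mult_fst3_cat_bvec_right:
  "homogeneous 2 s \<Longrightarrow> mult_fst3 G (cat s (bvec [b])) = tens [mult_fst G s, bvec b]"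
  by (rule lin_map_eq_on_homogeneous[OF lin_map_comp[OF lin_map_mult_fst3 lin_map_cat_left]
        lin_map_comp[OF lin_map_tens_left lin_map_mult_fst]])
    (auto elim!: length_2_cases simp: mult_fst3_def mult_fst_def)

lemma mult2_red_delta_right:
  assumes "homogeneous 2 t"
  shows "lin_ext (\<lambda>w. mult2 m (tens [G (bvec (w ! 0)), u]) (d (bvec (w ! 1)))) t
    = mult_fst3 G (app_at 1 d t)"
proof -
  have "mult_fst3 G (app_at 1 d t) = lin_ext (\<lambda>w. mult_fst3 G (app_at 1 d (bvec w))) t"
    by (subst app_at_eq_lin_ext) (simp add: lin_map_lin_ext_commute[OF lin_map_mult_fst3])
  also have "\<dots> = lin_ext (\<lambda>w. mult2 m (tens [G (bvec (w ! 0)), u]) (d (bvec (w ! 1)))) t"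
    by (rule lin_ext_cong)
      (use assms in \<open>auto simp: homogeneous_def mult_fst3_cat_bvec_left elim!: length_2_cases\<close>)
  finally show ?thesis ..
qed

text \<open>The one place where coassociativity enters: the third term of
  \<open>\<delta> (mult_fst e\<^sub>N (\<delta> x))\<close> is rewritten through \<open>(\<delta> \<otimes> id) \<circ> \<delta>\<close>, where the recursion
  \<open>e\<^sub>N\<^sub>+\<^sub>1 = id - mult_fst e\<^sub>N \<circ> \<delta>\<close> applies to the first factor.\<close>

lemma mult2_red_delta_e_trunc:
  "lin_ext (\<lambda>w. mult2 m (tens [e_trunc N (bvec (w ! 0)), u]) (d (bvec (w ! 1)))) (d x)
   = d x - lin_ext (\<lambda>w. tens [e_trunc (Suc N) (bvec (w ! 0)), bvec (w ! 1)]) (d x)"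
proof -
  have "lin_ext (\<lambda>w. mult2 m (tens [e_trunc N (bvec (w ! 0)), u]) (d (bvec (w ! 1)))) (d x)
      = mult_fst3 (e_trunc N) (app_at 0 d (d x))"
    by (simp only: mult2_red_delta_right[OF homogeneous_red_delta] red_delta_coassoc[symmetric])
  also have "\<dots> = lin_ext (\<lambda>w. mult_fst3 (e_trunc N) (app_at 0 d (bvec w))) (d x)"
    by (subst app_at_eq_lin_ext) (simp add: lin_map_lin_ext_commute[OF lin_map_mult_fst3])
  also have "\<dots> = lin_ext (\<lambda>w. tens [bvec (w ! 0) - e_trunc (Suc N) (bvec (w ! 0)), bvec (w ! 1)]) (d x)"
    by (rule lin_ext_cong)
      (use homogeneous_red_delta[of x] in \<open>auto simp: homogeneous_def e_trunc_Suc
        mult_fst3_cat_bvec_right[OF homogeneous_red_delta] elim!: length_2_cases\<close>)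
  also have "\<dots> = lin_ext bvec (d x)
      - lin_ext (\<lambda>w. tens [e_trunc (Suc N) (bvec (w ! 0)), bvec (w ! 1)]) (d x)"
    unfolding tens2_diff_left lin_ext_fun_diff
    by (rule arg_cong[where f = "\<lambda>z. z - _"], rule lin_ext_cong)
      (use homogeneous_red_delta[of x] in \<open>auto simp: homogeneous_def elim!: length_2_cases\<close>)
  finally show ?thesis by simp
qed

lemma red_delta_e_trunc_Suc:
  "d (e_trunc (Suc N) x) = lin_ext (\<lambda>w.
      tens [e_trunc (Suc N) (bvec (w ! 0)) - e_trunc N (bvec (w ! 0)), bvec (w ! 1)]
      - mult2 m (d (e_trunc N (bvec (w ! 0)))) (tens [u, bvec (w ! 1)])) (d x)"
proof -
  have "d (e_trunc (Suc N) x) = d x - d (mult_fst (e_trunc N) (d x))"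
    by (simp add: e_trunc_Suc lin_map_diff[OF lin_map_red_delta])
  also have "\<dots> = lin_ext (\<lambda>w. tens [e_trunc (Suc N) (bvec (w ! 0)), bvec (w ! 1)]) (d x)
      - lin_ext (\<lambda>w. tens [e_trunc N (bvec (w ! 0)), bvec (w ! 1)]) (d x)
      - lin_ext (\<lambda>w. mult2 m (d (e_trunc N (bvec (w ! 0)))) (tens [u, bvec (w ! 1)])) (d x)"
    by (simp only: red_delta_mult_fst mult2_red_delta_e_trunc) (simp add: algebra_simps)
  finally show ?thesis
    by (simp only: lin_ext_fun_diff tens2_diff_left)
qed

lemma red_delta_e_trunc_factors: "\<exists>g. \<forall>x. d (e_trunc N x) = lin_ext g (dp (Suc N) x)"
proof (induction N)
  case 0
  show ?case by (rule exI[of _ bvec]) (simp add: e_trunc_0)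
next
  case (Suc N)
  then obtain g where IH: "\<And>x. d (e_trunc N x) = lin_ext g (dp (Suc N) x)" by blast
  define c :: 'k where "c = (- 1) ^ Suc N"
  define g' where "g' v = smul c (tens [lcomb m (map bvec (butlast v)), bvec (last v)])
      - mult2 m (g (butlast v)) (tens [u, bvec (last v)])" for v
  have g'_cat: "lin_ext g' (cat s (bvec [b]))
      = smul c (tens [omega m s, bvec b]) - mult2 m (lin_ext g s) (tens [u, bvec b])" for s b
  proof (rule lin_map_eqI[OF lin_map_comp[OF lin_map_lin_ext lin_map_cat_left]])
    show "lin_map (\<lambda>s. smul c (tens [omega m s, bvec b]) - mult2 m (lin_ext g s) (tens [u, bvec b]))"
      by (intro lin_map_fun_diff lin_map_fun_smul lin_map_comp[OF lin_map_tens_left lin_map_omega]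
          lin_map_comp[OF lin_map_mult2_left lin_map_lin_ext])
  qed (simp add: g'_def omega_eq_lin_ext)
  have "d (e_trunc (Suc N) x) = lin_ext g' (dp (Suc (Suc N)) x)" for x
  proof -
    have "d (e_trunc (Suc N) x) = lin_ext (\<lambda>w.
          smul c (tens [omega m (dp (Suc N) (bvec (w ! 0))), bvec (w ! 1)])
        - mult2 m (lin_ext g (dp (Suc N) (bvec (w ! 0)))) (tens [u, bvec (w ! 1)])) (d x)"
      by (simp only: red_delta_e_trunc_Suc e_trunc_Suc_diff IH c_def tens2_smul_left)
    also have "\<dots> = lin_ext (\<lambda>w. lin_ext g' (cat (dp (Suc N) (bvec (w ! 0))) (bvec [w ! 1]))) (d x)"
      by (simp only: g'_cat)
    also have "\<dots> = lin_ext g' (dp (Suc (Suc N)) x)"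
      by (subst (2) delta_pow_Suc_right) (simp add: lin_map_lin_ext_commute)
    finally show ?thesis .
  qed
  then show ?case by blast
qed

lemma red_delta_e_map:
  assumes "connected u Delta eps" and "x \<in> Hbar eps"
  shows "d (e_map m u Delta x) = 0"
proof -
  from assms obtain N where N: "\<forall>n\<ge>N. dp n x = 0" by (auto simp: connected_def)
  obtain g where "\<And>x. d (e_trunc N x) = lin_ext g (dp (Suc N) x)"
    using red_delta_e_trunc_factors[of N] by blast
  then show ?thesis
    using e_map_eq_e_trunc[OF N order.refl] N by simp
qed


subsection \<open>\<open>e\<close> on primitive elements and their right combs\<close>

lemma delta_pow_Prim: "p \<in> Prim u Delta eps \<Longrightarrow> dp (Suc n) p = 0"
proof (induction n)
  case 0
  then show ?case by (simp add: Prim_def)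
next
  case (Suc n)
  then show ?case by (simp only: delta_pow_Suc[of "Suc n"] lin_map_zero[OF lin_map_app_at])
qed

lemma e_trunc_Prim: "p \<in> Prim u Delta eps \<Longrightarrow> e_trunc N p = p"
  by (induction N) (simp_all add: e_trunc_0 e_trunc_def delta_pow_Prim)

lemma e_map_Prim:
  assumes "p \<in> Prim u Delta eps"
  shows "e_map m u Delta p = p"
proof -
  have "\<forall>n\<ge>1. dp n p = 0"
    using delta_pow_Prim[OF assms] by (metis Suc_le_D One_nat_def)
  then show ?thesis
    using e_map_eq_e_trunc[of 1 p 1] e_trunc_Prim[OF assms] by simp
qed

lemma smul_unit_eq_0:
  assumes "smul c u = 0"
  shows "c = 0"
proof -
  have "u \<noteq> 0"
  proof
    assume "u = 0"
    then have "bvec undefined = (0 :: 'b \<Rightarrow>\<^sub>0 'k)"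
      using mult_unit_left[of "bvec undefined"] by simp
    then show False
      by (metis bvec_def lookup_single_eq lookup_zero zero_neq_one)
  qed
  then obtain k where "k \<in> Poly_Mapping.keys u"
    by (metis keys_eq_empty ex_in_conv)
  moreover have "c * Poly_Mapping.lookup u k = 0"
    using assms by (metis lookup_smul lookup_zero)
  ultimately show "c = 0" by (simp add: in_keys_iff)
qed

lemma lin_map_eps_right: "lin_map (eps_right eps)"
  by (simp add: eps_right_def[abs_def])

lemma eps_right_tens2: "eps_right eps (tens [a, b]) = smul (eps b) a"
  by (rule lin_map_tens2_eqI[OF lin_map_eps_right])
    (auto simp: lin_map_def eps_add eps_smul smul_add smul_add_left mult.commute eps_right_def)

lemma eps_right_mult2: "eps_right eps (mult2 m (tens [p, u]) s) = m p (eps_right eps s)"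
proof (rule lin_map_eqI[OF lin_map_comp[OF lin_map_eps_right lin_map_mult2_right]
      lin_map_comp[OF lin_map_mult_right lin_map_eps_right]])
  fix w
  have "eps_right eps (bvec w) = smul (eps (bvec (w ! 1))) (bvec (w ! 0))"
    by (simp add: eps_right_def)
  then show "eps_right eps (mult2 m (tens [p, u]) (bvec w)) = m p (eps_right eps (bvec w))"
    by (subst mult2_bvec_right)
      (simp del: tens2_bvec add: eps_right_tens2 lin_map_smul[OF lin_map_mult_right])
qed

text \<open>Applying \<open>id \<otimes> \<epsilon>\<close> to \<open>\<Delta>(p y) = p \<otimes> y + (p \<otimes> 1) \<delta>(y) + p y \<otimes> 1 + 1 \<otimes> p y\<close>
  leaves \<open>\<epsilon>(p y) 1 = 0\<close>.\<close>

lemma eps_mult_Prim: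
  assumes "p \<in> Prim u Delta eps"
  shows "eps (m p y) = 0"
proof -
  from assms have p_prim: "d p = 0" by (simp add: Prim_def)
  have "Delta (m p y) = tens [p, y] + mult2 m (tens [p, u]) (d y) + tens [m p y, u] + tens [u, m p y]"
    by (subst Delta_eq_red_delta) (simp add: red_delta_mult p_prim)
  then have py: "m p y = smul (eps y) p + m p (eps_right eps (d y)) + smul (eps u) (m p y)
      + smul (eps (m p y)) u"
    using eps_right_Delta[of "m p y"]
    by (simp add: lin_map_add[OF lin_map_eps_right] eps_right_tens2 eps_right_mult2)
  have "eps_right eps (d y) = y - smul (eps u) y - smul (eps y) u"
    by (simp add: red_delta_def lin_map_diff[OF lin_map_eps_right] eps_right_tens2 eps_right_Delta)
  then have "m p (eps_right eps (d y)) = m p y - smul (eps u) (m p y) - smul (eps y) p"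
    by (simp add: lin_map_diff[OF lin_map_mult_right] lin_map_smul[OF lin_map_mult_right])
  with py have "smul (eps (m p y)) u = 0"
    by (simp add: algebra_simps)
  then show ?thesis by (rule smul_unit_eq_0)
qed

lemma rcomb_Cons: "ys \<noteq> [] \<Longrightarrow> rcomb m (p # ys) = m p (rcomb m ys)"
  by (cases ys) auto

lemma rcomb_Prim_Hbar: "xs \<noteq> [] \<Longrightarrow> set xs \<subseteq> Prim u Delta eps \<Longrightarrow> rcomb m xs \<in> Hbar eps"
  by (cases xs rule: remdups_adj.cases) (auto simp: Prim_def Hbar_def eps_mult_Prim)

lemma red_delta_rcomb_Prim:
  "xs \<noteq> [] \<Longrightarrow> set xs \<subseteq> Prim u Delta eps \<Longrightarrow>
   d (rcomb m xs) = (\<Sum>j\<in>{1..<length xs}. tens [rcomb m (take j xs), rcomb m (drop j xs)])"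
proof (induction xs)
  case Nil
  then show ?case by simp
next
  case (Cons p ys)
  have p_prim: "d p = 0" using Cons.prems by (simp add: Prim_def)
  show ?case
  proof (cases "ys = []")
    case True
    then show ?thesis using p_prim by simp
  next
    case False
    let ?T = "\<lambda>j. tens [rcomb m (take j (p # ys)), rcomb m (drop j (p # ys))]"
    have "d (rcomb m (p # ys)) = tens [p, rcomb m ys] + mult2 m (tens [p, u]) (d (rcomb m ys))"
      by (simp add: rcomb_Cons[OF False] red_delta_mult p_prim)
    also have "\<dots> = ?T 1 + (\<Sum>j\<in>{1..<length ys}. ?T (Suc j))"
      using Cons False
      by (simp add: lin_map_sum[OF lin_map_mult2_right] rcomb_Cons)
    also have "(\<Sum>j\<in>{1..<length ys}. ?T (Suc j)) = (\<Sum>j\<in>{Suc 1..<Suc (length ys)}. ?T j)"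
      by (rule sum.shift_bounds_Suc_ivl[symmetric])
    also have "?T 1 + \<dots> = (\<Sum>j\<in>{1..<length (p # ys)}. ?T j)"
      by (subst sum.atLeast_Suc_lessThan[of 1]) (use False in auto)
    finally show ?thesis .
  qed
qed

text \<open>In \<open>e\<^sub>N\<^sub>+\<^sub>1 = id - mult_fst e\<^sub>N \<circ> \<delta>\<close> only the deconcatenation term
  \<open>x\<^sub>1 \<otimes> \<omega>\<^sub>r(x\<^sub>2, \<dots>)\<close> survives, since \<open>e\<^sub>N\<close> fixes \<open>x\<^sub>1\<close> and kills the shorter combs.\<close>

lemma e_trunc_rcomb_Prim:
  "set xs \<subseteq> Prim u Delta eps \<Longrightarrow> 2 \<le> length xs \<Longrightarrow> length xs \<le> Suc N \<Longrightarrow>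
   e_trunc N (rcomb m xs) = 0"
proof (induction N arbitrary: xs)
  case 0
  then show ?case by simp
next
  case (Suc N)
  obtain p ys where xs: "xs = p # ys"
    using Suc.prems(2) by (cases xs) auto
  with Suc.prems(2) have ys: "ys \<noteq> []" by auto
  from xs have xs_nonempty: "xs \<noteq> []" by simp
  let ?F = "\<lambda>j. m (e_trunc N (rcomb m (take j xs))) (rcomb m (drop j xs))"
  have "mult_fst (e_trunc N) (d (rcomb m xs)) = (\<Sum>j\<in>{1..<length xs}. ?F j)"
    using red_delta_rcomb_Prim[OF _ Suc.prems(1)] xs_nonempty
    by (simp add: lin_map_sum[OF lin_map_mult_fst] mult_fst_tens2[OF lin_map_e_trunc])
  also have "\<dots> = ?F 1 + (\<Sum>j\<in>{2..<length xs}. ?F j)"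
    using Suc.prems(2) by (simp add: sum.atLeast_Suc_lessThan numeral_2_eq_2)
  also have "(\<Sum>j\<in>{2..<length xs}. ?F j) = 0"
  proof (rule sum.neutral, rule ballI)
    fix j assume "j \<in> {2..<length xs}"
    then have "e_trunc N (rcomb m (take j xs)) = 0"
      using Suc.prems by (intro Suc.IH) (auto dest: set_take_subset[THEN subset_trans])
    then show "?F j = 0" by simp
  qed
  also have "?F 1 = rcomb m xs"
    using Suc.prems(1) xs ys by (simp add: e_trunc_Prim rcomb_Cons)
  finally show ?case
    by (simp add: e_trunc_Suc)
qed

lemma e_map_rcomb_Prim:
  assumes conn: "connected u Delta eps"
    and xs: "2 \<le> length xs" "set xs \<subseteq> Prim u Delta eps"
  shows "e_map m u Delta (rcomb m xs) = 0"
proof -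
  have "rcomb m xs \<in> Hbar eps"
    using xs by (intro rcomb_Prim_Hbar) auto
  then obtain N where N: "\<forall>n\<ge>N. dp n (rcomb m xs) = 0"
    using conn by (auto simp: connected_def)
  have "e_map m u Delta (rcomb m xs) = e_trunc (max N (length xs)) (rcomb m xs)"
    by (rule e_map_eq_e_trunc[OF N]) simp
  also have "\<dots> = 0"
    using xs by (intro e_trunc_rcomb_Prim) auto
  finally show ?thesis .
qed

end

theorem lemma4p2:
  fixes m :: "('b \<Rightarrow>\<^sub>0 'k::field) \<Rightarrow> ('b \<Rightarrow>\<^sub>0 'k) \<Rightarrow> ('b \<Rightarrow>\<^sub>0 'k)"
    and u :: "'b \<Rightarrow>\<^sub>0 'k"
    and Delta :: "('b \<Rightarrow>\<^sub>0 'k) \<Rightarrow> ('b list \<Rightarrow>\<^sub>0 'k)"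
    and eps :: "('b \<Rightarrow>\<^sub>0 'k) \<Rightarrow> 'k"
  assumes bialg: "AsC_Mag_bialgebra m u Delta eps"
    and conn: "connected u Delta eps"
  shows "(\<forall>xs. 2 \<le> length xs \<longrightarrow> set xs \<subseteq> Prim u Delta eps \<longrightarrow>
            e_map m u Delta (rcomb m xs) = 0)
       \<and> (\<forall>x\<in>Hbar eps. red_delta u Delta (e_map m u Delta x) = 0)
       \<and> (\<forall>x\<in>Prim u Delta eps. e_map m u Delta x = x)"
proof -
  interpret AsC_Mag m u Delta eps by (rule AsC_Mag.intro[OF bialg])
  show ?thesis
    using e_map_rcomb_Prim[OF conn] red_delta_e_map[OF conn] e_map_Prim by blast
qed

end
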